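(* For all $n\geq 1$, \[2\bar{a}_2(n)=\bar{p}(2n,n).\]
   Context: An overpartition of $n$ is a partition of $n$ in which the first occurrence of each distinct part value may be overlined. $\bar{a}_2(n)$ is the number of overpartitions of $n$ in which the smallest part value occurs at least twice, where an overlined part and a non-overlined part of the same value count as equal. $\bar{p}(N,t)$ is the number of overpartitions of $N$ in which the largest part minus the smallest part equals $t$. *)

theory Defs
  imports Main "HOL-Library.Multiset"
begin

text \<open>An overpartition of n is represented as a pair (M, Ov): M is a multiset of
positive parts summing to n (the underlying partition), and Ov is the set of part
values whose first occurrence is overlined (so Ov is a subset of the distinct part values).\<close>

definition overpartitions :: "nat \<Rightarrow> (nat multiset \<times> nat set) set" where
  "overpartitions n = {(M, Ov). (\<forall>x\<in>#M. 0 < x) \<and> sum_mset M = n \<and> Ov \<subseteq> set_mset M}"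

definition smallest_part :: "nat multiset \<Rightarrow> nat" where
  "smallest_part M = Min (set_mset M)"

definition largest_part :: "nat multiset \<Rightarrow> nat" where
  "largest_part M = Max (set_mset M)"

definition abar2 :: "nat \<Rightarrow> nat" where
  "abar2 n = card {(M, Ov) \<in> overpartitions n. M \<noteq> {#} \<and> count M (smallest_part M) \<ge> 2}"

definition pbar :: "nat \<Rightarrow> nat \<Rightarrow> nat" where
  "pbar N t = card {(M, Ov) \<in> overpartitions N. M \<noteq> {#} \<and> largest_part M - smallest_part M = t}"

end

theory Submission
  imports Defs
begin

text \<open>Let the smallest part s of an overpartition of n occur at least twice. Replacing one
copy of s by s + n gives an overpartition of 2n with smallest part s and largest part s + n;
since every old part is at most n, the part s + n is new and may or may not be overlined, which
accounts for the factor 2. Conversely, if the largest part L of an overpartition of 2n exceeds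
its smallest part s by n, then L occurs only once, and replacing it by s undoes the construction.\<close>

lemma member_le_sum_mset:
  fixes x :: "'a::canonically_ordered_monoid_add"
  assumes "x \<in># M"
  shows "x \<le> sum_mset M"
  using sum_mset.remove[OF assms] by (metis le_iff_add)

lemma smallest_part_in: "M \<noteq> {#} \<Longrightarrow> smallest_part M \<in># M"
  unfolding smallest_part_def by simp

lemma smallest_part_le: "y \<in># M \<Longrightarrow> smallest_part M \<le> y"
  unfolding smallest_part_def by simp

lemma smallest_part_eqI: "x \<in># M \<Longrightarrow> (\<And>y. y \<in># M \<Longrightarrow> x \<le> y) \<Longrightarrow> smallest_part M = x"
  unfolding smallest_part_def by (intro Min_eqI) auto

lemma largest_part_in: "M \<noteq> {#} \<Longrightarrow> largest_part M \<in># M"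
  unfolding largest_part_def by simp

lemma largest_part_eqI: "x \<in># M \<Longrightarrow> (\<And>y. y \<in># M \<Longrightarrow> y \<le> x) \<Longrightarrow> largest_part M = x"
  unfolding largest_part_def by (intro Max_eqI) auto

definition raise_smallest :: "nat \<Rightarrow> nat multiset \<Rightarrow> nat multiset" where
  "raise_smallest n M = M - {#smallest_part M#} + {#smallest_part M + n#}"

definition lower_largest :: "nat multiset \<Rightarrow> nat multiset" where
  "lower_largest M = M - {#largest_part M#} + {#smallest_part M#}"

lemma raise_smallest:
  assumes pos: "\<forall>x\<in>#M. 0 < x" and sum: "sum_mset M = n"
    and repeated: "count M (smallest_part M) \<ge> 2"
  defines "s \<equiv> smallest_part M"
  shows "s + n \<notin># M"
    and "set_mset (raise_smallest n M) = insert (s + n) (set_mset M)"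
    and "smallest_part (raise_smallest n M) = s"
    and "largest_part (raise_smallest n M) = s + n"
    and "sum_mset (raise_smallest n M) = 2 * n"
    and "lower_largest (raise_smallest n M) = M"
proof -
  have s_in_rest: "s \<in># M - {#s#}"
    using repeated unfolding s_def by (simp add: in_diff_count)
  then have s_in: "s \<in># M"
    by (meson in_diffD)
  have s_le: "s \<le> y" if "y \<in># M" for y
    unfolding s_def using that by (rule smallest_part_le)
  have parts_le: "y \<le> n" if "y \<in># M" for y
    using member_le_sum_mset[OF that] sum by simp
  have "0 < s"
    using pos s_in by blast
  then show "s + n \<notin># M"
    using parts_le by fastforce
  have "set_mset M = insert s (set_mset (M - {#s#}))"
    using s_in by (metis insert_DiffM set_mset_add_mset_insert)
  then have set_rest: "set_mset (M - {#s#}) = set_mset M"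
    using s_in_rest by (simp add: insert_absorb)
  show set_raise: "set_mset (raise_smallest n M) = insert (s + n) (set_mset M)"
    unfolding raise_smallest_def s_def[symmetric] by (simp add: set_rest)
  show smallest: "smallest_part (raise_smallest n M) = s"
    by (rule smallest_part_eqI) (auto simp: set_raise s_in s_le)
  show "largest_part (raise_smallest n M) = s + n"
    by (rule largest_part_eqI) (auto simp: set_raise dest: parts_le)
  show "sum_mset (raise_smallest n M) = 2 * n"
    using sum_mset.remove[OF s_in] sum unfolding raise_smallest_def s_def[symmetric] by simp
  show "lower_largest (raise_smallest n M) = M"
    using s_in unfolding lower_largest_def smallest \<open>largest_part (raise_smallest n M) = s + n\<close>
    unfolding raise_smallest_def s_def[symmetric] by simp
qed

lemma lower_largest:
  assumes pos: "\<forall>x\<in>#M. 0 < x" and sum: "sum_mset M = 2 * n" and "M \<noteq> {#}"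
    and spread: "largest_part M - smallest_part M = n" and "n \<ge> 1"
  defines "s \<equiv> smallest_part M" and "L \<equiv> largest_part M"
  shows "L = s + n"
    and "set_mset (lower_largest M) = set_mset M - {L}"
    and "smallest_part (lower_largest M) = s"
    and "count (lower_largest M) s \<ge> 2"
    and "sum_mset (lower_largest M) = n"
    and "raise_smallest n (lower_largest M) = M"
proof -
  have s_in: "s \<in># M" and L_in: "L \<in># M"
    using \<open>M \<noteq> {#}\<close> unfolding s_def L_def by (simp_all add: smallest_part_in largest_part_in)
  have s_le: "s \<le> y" if "y \<in># M" for y
    unfolding s_def using that by (rule smallest_part_le)
  show L_eq: "L = s + n"
    using spread s_le[OF L_in] unfolding s_def L_def by simp
  define R where "R = M - {#L#}"
  have M_eq: "M = add_mset L R"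
    using L_in unfolding R_def by simp
  have "s \<noteq> L"
    using L_eq \<open>n \<ge> 1\<close> by simp
  then have s_in_R: "s \<in># R"
    using s_in unfolding M_eq by simp
  \<comment> \<open>The largest part occurs only once: otherwise the parts would sum to at least 2L + s > 2n.\<close>
  have L_notin_R: "L \<notin># R"
  proof
    assume "L \<in># R"
    then have "sum_mset R = L + sum_mset (R - {#L#})"
      by (rule sum_mset.remove)
    moreover have "s \<le> sum_mset (R - {#L#})"
      using s_in_R \<open>s \<noteq> L\<close> by (intro member_le_sum_mset) (simp add: in_diff_count)
    moreover have "0 < s"
      using pos s_in by blast
    ultimately show False
      using sum L_eq unfolding M_eq by simp
  qed
  have lower_eq: "lower_largest M = add_mset s R"
    unfolding lower_largest_def R_def s_def L_def by simp
  show set_lower: "set_mset (lower_largest M) = set_mset M - {L}"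
    using s_in_R L_notin_R unfolding lower_eq by (subst M_eq) auto
  show smallest: "smallest_part (lower_largest M) = s"
    by (rule smallest_part_eqI) (simp add: lower_eq, use set_lower s_le in blast)
  show "count (lower_largest M) s \<ge> 2"
    using s_in_R unfolding lower_eq by simp
  show "sum_mset (lower_largest M) = n"
    using sum L_eq unfolding lower_eq by (subst (asm) M_eq) simp
  show "raise_smallest n (lower_largest M) = M"
    unfolding raise_smallest_def smallest unfolding lower_eq
    using M_eq L_eq by simp
qed

definition repeated_smallest_overpartitions :: "nat \<Rightarrow> (nat multiset \<times> nat set) set" where
  "repeated_smallest_overpartitions n =
     {(M, Ov) \<in> overpartitions n. M \<noteq> {#} \<and> count M (smallest_part M) \<ge> 2}"

definition spread_overpartitions :: "nat \<Rightarrow> nat \<Rightarrow> (nat multiset \<times> nat set) set" where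
  "spread_overpartitions N t =
     {(M, Ov) \<in> overpartitions N. M \<noteq> {#} \<and> largest_part M - smallest_part M = t}"

fun raise_overpartition :: "nat \<Rightarrow> (nat multiset \<times> nat set) \<times> bool \<Rightarrow> nat multiset \<times> nat set" where
  "raise_overpartition n ((M, Ov), overline) =
     (raise_smallest n M, if overline then insert (smallest_part M + n) Ov else Ov)"

fun lower_overpartition :: "nat multiset \<times> nat set \<Rightarrow> (nat multiset \<times> nat set) \<times> bool" where
  "lower_overpartition (M, Ov) = ((lower_largest M, Ov - {largest_part M}), largest_part M \<in> Ov)"

lemma raise_overpartition_in_spread:
  assumes "p \<in> repeated_smallest_overpartitions n"
  shows "raise_overpartition n (p, overline) \<in> spread_overpartitions (2 * n) n"
    and "lower_overpartition (raise_overpartition n (p, overline)) = (p, overline)"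
proof -
  obtain M Ov where p: "p = (M, Ov)" and pos: "\<forall>x\<in>#M. 0 < x" and sum: "sum_mset M = n"
    and Ov: "Ov \<subseteq> set_mset M" and repeated: "count M (smallest_part M) \<ge> 2"
    using assms unfolding repeated_smallest_overpartitions_def overpartitions_def by auto
  note raised = raise_smallest[OF pos sum repeated]
  have "0 < smallest_part M"
    using pos repeated by (metis count_eq_zero_iff not_numeral_le_zero)
  show "raise_overpartition n (p, overline) \<in> spread_overpartitions (2 * n) n"
    using pos Ov raised(2-5) \<open>0 < smallest_part M\<close> unfolding p spread_overpartitions_def overpartitions_def
    by (auto simp flip: set_mset_eq_empty_iff)
  show "lower_overpartition (raise_overpartition n (p, overline)) = (p, overline)"
    using Ov raised unfolding p by auto
qed

lemma lower_overpartition_in_repeated_smallest: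
  assumes "p \<in> spread_overpartitions (2 * n) n" and "n \<ge> 1"
  shows "lower_overpartition p \<in> repeated_smallest_overpartitions n \<times> UNIV"
    and "raise_overpartition n (lower_overpartition p) = p"
proof -
  obtain M Ov where p: "p = (M, Ov)" and pos: "\<forall>x\<in>#M. 0 < x" and sum: "sum_mset M = 2 * n"
    and Ov: "Ov \<subseteq> set_mset M" and "M \<noteq> {#}" and spread: "largest_part M - smallest_part M = n"
    using assms unfolding spread_overpartitions_def overpartitions_def by auto
  note lowered = lower_largest[OF pos sum \<open>M \<noteq> {#}\<close> spread \<open>n \<ge> 1\<close>]
  show "lower_overpartition p \<in> repeated_smallest_overpartitions n \<times> UNIV"
    using pos Ov lowered(2-5) unfolding p repeated_smallest_overpartitions_def overpartitions_def
    by (auto dest: multi_member_split)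
  show "raise_overpartition n (lower_overpartition p) = p"
    using lowered(1,3,6) unfolding p by auto
qed

lemma bij_betw_raise_overpartition:
  assumes "n \<ge> 1"
  shows "bij_betw (raise_overpartition n)
           (repeated_smallest_overpartitions n \<times> UNIV) (spread_overpartitions (2 * n) n)"
  by (rule bij_betw_byWitness[where f' = lower_overpartition])
    (use raise_overpartition_in_spread lower_overpartition_in_repeated_smallest[OF _ assms] in auto)

theorem theorem5p2:
  fixes n :: nat
  assumes "n \<ge> 1"
  shows "2 * abar2 n = pbar (2 * n) n"
proof -
  have "pbar (2 * n) n = card (spread_overpartitions (2 * n) n)"
    unfolding pbar_def spread_overpartitions_def ..
  also have "\<dots> = card (repeated_smallest_overpartitions n \<times> (UNIV :: bool set))"
    using bij_betw_same_card[OF bij_betw_raise_overpartition[OF assms]] by simp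
  also have "\<dots> = 2 * abar2 n"
    unfolding card_cartesian_product abar2_def repeated_smallest_overpartitions_def by simp
  finally show ?thesis ..
qed

end
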